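(* Assume (A2) and (A3). If $\frac{\log p}{\rho_*n}\to0$, then $$\left\|D\,\mathrm{diag}\!\left(\tfrac1n\tilde X^\top\tilde X\right)-\tilde D\,\mathrm{diag}(\Sigma_0)\right\|_\infty\le O_{\mathbb P}\!\left(\sigma_x^2\sqrt{\frac{\log p}{\rho_*^3n}}\right).$$
   Context: (A2) rows of $X\in\mathbb R^{n\times p}$ i.i.d. zero-mean sub-Gaussian with covariance $\Sigma_0$ and parameter $\sigma_x$. (A3) $R_{ij}\sim$ Bernoulli$(\rho_j)$ independent of $X$, $\rho_*=\min_j\rho_j>0$. $\tilde X_{ij}=R_{ij}X_{ij}/\rho_j$; $D=\mathrm{diag}(1-\rho_1,\dots,1-\rho_p)$; $\tilde D=\mathrm{diag}(1/\rho_1-1,\dots,1/\rho_p-1)$; $\mathrm{diag}(A)$ is the diagonal matrix with the diagonal of $A$; $\|\cdot\|_\infty$ is the entrywise maximum. Asymptotics as $n\to\infty$. *)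

theory Defs
  imports "HOL-Probability.Probability"
begin

definition subgaussian_vec :: "'a measure \<Rightarrow> nat \<Rightarrow> ('a \<Rightarrow> nat \<Rightarrow> real) \<Rightarrow> real \<Rightarrow> bool" where
  "subgaussian_vec M p x \<sigma> \<longleftrightarrow>
     (\<forall>v::nat \<Rightarrow> real. (\<Sum>j<p. (v j)\<^sup>2) = 1 \<longrightarrow>
        (\<forall>t::real. integrable M (\<lambda>\<omega>. exp (t * (\<Sum>j<p. v j * x \<omega> j))) \<and>
           (\<integral>\<omega>. exp (t * (\<Sum>j<p. v j * x \<omega> j)) \<partial>M) \<le> exp (\<sigma>\<^sup>2 * t\<^sup>2 / 2)))"

definition mean_zero_cov :: "'a measure \<Rightarrow> nat \<Rightarrow> ('a \<Rightarrow> nat \<Rightarrow> real) \<Rightarrow> (nat \<Rightarrow> nat \<Rightarrow> real) \<Rightarrow> bool" where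
  "mean_zero_cov M p x \<Sigma> \<longleftrightarrow>
     (\<forall>j<p. integrable M (\<lambda>\<omega>. x \<omega> j) \<and> (\<integral>\<omega>. x \<omega> j \<partial>M) = 0) \<and>
     (\<forall>j<p. \<forall>k<p. integrable M (\<lambda>\<omega>. x \<omega> j * x \<omega> k) \<and>
        (\<integral>\<omega>. x \<omega> j * x \<omega> k \<partial>M) = \<Sigma> j k)"

definition bigO_P :: "(nat \<Rightarrow> 'a measure) \<Rightarrow> (nat \<Rightarrow> 'a \<Rightarrow> real) \<Rightarrow> (nat \<Rightarrow> real) \<Rightarrow> bool" where
  "bigO_P M Y a \<longleftrightarrow>
     (\<forall>\<epsilon>>0. \<exists>C. \<forall>\<^sub>F n in sequentially.
        measure (M n) {\<omega> \<in> space (M n). \<bar>Y n \<omega>\<bar> > C * a n} \<le> \<epsilon>)"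

end

theory Submission
  imports Defs
begin

text \<open>For a fixed column \<open>j\<close> the masked squares \<open>Z\<^sub>i = (R\<^sub>i\<^sub>j X\<^sub>i\<^sub>j / \<rho>\<^sub>j)\<^sup>2\<close> are
  independent across rows, have mean \<open>\<Sigma>\<^sub>j\<^sub>j / \<rho>\<^sub>j\<close>, and, since \<open>R\<^sub>i\<^sub>j \<in> {0, 1}\<close>, their
  moments are \<open>E Z\<^sub>i\<^sup>k = \<rho>\<^sub>j\<^sup>1\<^sup>-\<^sup>2\<^sup>k E X\<^sub>i\<^sub>j\<^sup>2\<^sup>k \<le> 2 \<rho>\<^sub>j k! (2 e \<sigma>\<^sup>2 / \<rho>\<^sub>j\<^sup>2)\<^sup>k\<close> by the
  sub-Gaussian moment bound. The \<open>j\<close>-th deviation equals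
  \<open>(1 - \<rho>\<^sub>j) \<bar>n\<^sup>-\<^sup>1 \<Sigma>\<^sub>i Z\<^sub>i - \<Sigma>\<^sub>j\<^sub>j / \<rho>\<^sub>j\<bar>\<close>, so Bernstein's inequality (a Chernoff bound fed
  with these moments) shows that it exceeds \<open>w\<close> with probability at most
  \<open>2 exp (- n w\<^sup>2 \<rho>\<^sub>*\<^sup>3 / (64 e\<^sup>2 \<sigma>\<^sup>4))\<close>. For \<open>w = C \<sigma>\<^sup>2 sqrt (log p / (\<rho>\<^sub>*\<^sup>3 n))\<close> with
  \<open>C = 8 e m\<close>, a union bound over the \<open>p\<close> columns gives failure probability at most \<open>4 / 2\<^sup>m\<close>
  once \<open>log p / (\<rho>\<^sub>* n) \<le> 1 / m\<^sup>2\<close>, which the rate hypothesis guarantees eventually.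
  If \<open>\<sigma> = 0\<close> the entries vanish almost surely and so does the deviation.\<close>

definition bernstein_moments :: "'a measure \<Rightarrow> ('a \<Rightarrow> real) \<Rightarrow> real \<Rightarrow> real \<Rightarrow> bool" where
  "bernstein_moments M Z c b \<longleftrightarrow>
     (\<forall>k\<ge>1. integrable M (\<lambda>\<omega>. Z \<omega> ^ k) \<and> (\<integral>\<omega>. Z \<omega> ^ k \<partial>M) \<le> c * fact k * b ^ k)"

lemma power_div_fact_le_exp:
  fixes y :: real
  assumes "0 \<le> y"
  shows "y ^ m / fact m \<le> exp y"
proof -
  have exp: "(\<lambda>n. y ^ n / fact n) sums exp y"
    using exp_converges[of y] by (simp add: divide_inverse_commute scaleR_conv_of_real)
  have "(\<Sum>n\<in>{m}. y ^ n / fact n) \<le> (\<Sum>n. y ^ n / fact n)"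
    by (rule sum_le_suminf) (use exp assms in \<open>auto simp: sums_iff\<close>)
  then show ?thesis
    using exp by (simp add: sums_iff)
qed

lemma even_power_le_exp_plus_exp:
  fixes x t :: real
  assumes "0 < t"
  shows "x ^ (2*k) \<le> fact (2*k) / t ^ (2*k) * (exp (t*x) + exp (-(t*x)))"
proof -
  have "t ^ (2*k) * x ^ (2*k) / fact (2*k) = \<bar>t*x\<bar> ^ (2*k) / fact (2*k)"
    by (simp add: power_mult power_mult_distrib)
  also have "\<dots> \<le> exp \<bar>t*x\<bar>"
    by (rule power_div_fact_le_exp) simp
  also have "\<dots> \<le> exp (t*x) + exp (-(t*x))"
    using exp_gt_zero[of "t*x"] exp_gt_zero[of "-(t*x)"] by (cases "0 \<le> t*x") auto
  finally show ?thesis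
    using assms by (simp add: field_simps)
qed

lemma fact_double_le: "fact (2*k) \<le> (4::real) ^ k * (fact k)\<^sup>2"
proof (induction k)
  case 0
  then show ?case by simp
next
  case (Suc k)
  have "fact (2 * Suc k) = real (2*k+2) * real (2*k+1) * fact (2*k)"
    by (simp add: fact_Suc algebra_simps)
  also have "\<dots> \<le> (4 * (real k + 1)\<^sup>2) * (4 ^ k * (fact k)\<^sup>2)"
    by (rule mult_mono[OF _ Suc.IH]) (auto simp: power2_eq_square algebra_simps)
  also have "\<dots> = 4 ^ Suc k * (fact (Suc k))\<^sup>2"
    by (simp add: fact_Suc power2_eq_square algebra_simps)
  finally show ?case .
qed

lemma fact_double_mult_power_le:
  assumes k: "1 \<le> k" and v: "0 < v"
  shows "fact (2*k) * (v / (2 * real k)) ^ k * exp 1 ^ k \<le> fact k * (2 * exp 1 * v) ^ k"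
proof -
  have "fact (2*k) * (v / (2 * real k)) ^ k * exp 1 ^ k
      \<le> (4 ^ k * (fact k)\<^sup>2) * (v / (2 * real k)) ^ k * exp 1 ^ k"
    using fact_double_le[of k] v by (intro mult_right_mono) auto
  also have "\<dots> = fact k * (2 * exp 1 * v) ^ k * (fact k / real k ^ k)"
  proof -
    have rearrange: "(A * A * F\<^sup>2) * (V / (A * B)) * E = F * (A * E * V) * (F / B)"
      if "A \<noteq> 0" "B \<noteq> 0" for A B F V E :: real
      using that by (simp add: field_simps power2_eq_square)
    have "(4::real) ^ k = 2 ^ k * 2 ^ k"
      by (simp flip: power_mult_distrib)
    moreover have "(v / (2 * real k)) ^ k = v ^ k / (2 ^ k * real k ^ k)"
      by (simp add: power_divide power_mult_distrib)
    moreover have "(2 * exp 1 * v) ^ k = 2 ^ k * exp 1 ^ k * v ^ k"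
      by (simp add: power_mult_distrib)
    ultimately show ?thesis
      using rearrange[of "2 ^ k" "real k ^ k" "fact k" "v ^ k" "exp 1 ^ k"] k by simp
  qed
  also have "\<dots> \<le> fact k * (2 * exp 1 * v) ^ k * 1"
    using fact_le_power[of k, where 'a=real] k v by (intro mult_left_mono) (auto simp: divide_le_eq)
  finally show ?thesis
    by simp
qed

lemma exp_tail_sums:
  fixes y :: real
  shows "(\<lambda>n. y ^ (n+2) / fact (n+2)) sums (exp y - 1 - y)"
proof -
  have "(\<lambda>n. y ^ n / fact n) sums exp y"
    using exp_converges[of y] by (simp add: divide_inverse_commute scaleR_conv_of_real)
  from sums_split_initial_segment[OF this, of 2] show ?thesis
    by (simp add: lessThan_nat_numeral diff_diff_eq add.commute)
qed

lemma exp_neg_le_quadratic: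
  fixes y :: real
  assumes "0 \<le> y"
  shows "exp (-y) \<le> 1 - y + y\<^sup>2 / 2"
proof -
  define f where "f = (\<lambda>t::real. 1 - t + t\<^sup>2 / 2 - exp (-t))"
  have "f 0 \<le> f y"
  proof (rule DERIV_nonneg_imp_increasing_open[OF assms])
    fix x :: real
    have "(f has_real_derivative (-1 + x + exp (-x))) (at x)"
      unfolding f_def by (auto intro!: derivative_eq_intros)
    moreover have "0 \<le> -1 + x + exp (-x)"
      using exp_ge_add_one_self[of "-x"] by simp
    ultimately show "\<exists>d. (f has_real_derivative d) (at x) \<and> 0 \<le> d"
      by blast
  next
    show "continuous_on {0..y} f"
      unfolding f_def by (intro continuous_intros) auto
  qed
  then show ?thesis
    by (simp add: f_def)
qed

lemma abs_masked_deviation_le: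
  fixes S c \<rho> n :: real
  assumes \<rho>: "0 < \<rho>" "\<rho> \<le> 1" and n: "0 < n"
  shows "\<bar>(1 - \<rho>) * ((1 / n) * S) - (1 / \<rho> - 1) * c\<bar> \<le> \<bar>S - n * (c / \<rho>)\<bar> / n"
proof -
  have "(1 - \<rho>) * ((1 / n) * S) - (1 / \<rho> - 1) * c = (1 - \<rho>) * ((S - n * (c / \<rho>)) / n)"
    using \<rho> n by (simp add: field_simps)
  then have "\<bar>(1 - \<rho>) * ((1 / n) * S) - (1 / \<rho> - 1) * c\<bar> = (1 - \<rho>) * (\<bar>S - n * (c / \<rho>)\<bar> / n)"
    using \<rho> n by (simp add: abs_mult)
  also have "\<dots> \<le> \<bar>S - n * (c / \<rho>)\<bar> / n"
    using \<rho> n by (intro mult_left_le_one_le) auto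
  finally show ?thesis .
qed

text \<open>The choice of the Chernoff parameter \<open>s\<close> for a column with masking probability
  \<open>\<rho> \<ge> r\<close> and moment scale \<open>a / \<rho>\<^sup>2\<close>.\<close>

lemma bernstein_parameter_choice:
  fixes \<rho> r a w :: real and n :: nat
  assumes r: "0 < r" "r \<le> \<rho>" and a: "0 < a" and w: "0 < w" and wr: "w * r \<le> 4 * a"
  defines "s \<equiv> w * r ^ 3 / (8 * a\<^sup>2)"
  shows "0 < s" and "s * (a / \<rho>\<^sup>2) \<le> 1/2"
    and "- s * (real n * w) + real n * (4 * \<rho> * (s * (a / \<rho>\<^sup>2))\<^sup>2) \<le> - (real n * w\<^sup>2 * r ^ 3 / (16 * a\<^sup>2))"
proof -
  show s: "0 < s"
    using w r a by (simp add: s_def)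
  have "s * (a / \<rho>\<^sup>2) \<le> s * (a / r\<^sup>2)"
    using a r s by (intro mult_left_mono divide_left_mono power_mono mult_pos_pos) auto
  also have "s * (a / r\<^sup>2) = w * r / (8 * a)"
    using a r by (simp add: s_def power2_eq_square power3_eq_cube field_simps)
  also have "\<dots> \<le> 1/2"
    using wr a by (simp add: divide_le_eq mult.commute)
  finally show "s * (a / \<rho>\<^sup>2) \<le> 1/2" .
  have "4 * \<rho> * (s * (a / \<rho>\<^sup>2))\<^sup>2 = 4 * a\<^sup>2 / \<rho> ^ 3 * s\<^sup>2"
    using r by (simp add: power2_eq_square power3_eq_cube field_simps)
  also have "\<dots> \<le> 4 * a\<^sup>2 / r ^ 3 * s\<^sup>2"
    using a r by (intro mult_right_mono divide_left_mono power_mono mult_pos_pos) auto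
  finally have "real n * (4 * \<rho> * (s * (a / \<rho>\<^sup>2))\<^sup>2) \<le> real n * (4 * a\<^sup>2 / r ^ 3 * s\<^sup>2)"
    by (intro mult_left_mono) auto
  also have "\<dots> = s * (real n * w) - real n * w\<^sup>2 * r ^ 3 / (16 * a\<^sup>2)"
    using a r by (simp add: s_def power2_eq_square power3_eq_cube field_simps)
  finally show "- s * (real n * w) + real n * (4 * \<rho> * (s * (a / \<rho>\<^sup>2))\<^sup>2)
      \<le> - (real n * w\<^sup>2 * r ^ 3 / (16 * a\<^sup>2))"
    by simp
qed

lemma union_bound_decay:
  fixes p m :: nat
  assumes p: "2 \<le> p" and m: "1 \<le> m"
  shows "real p * (2 * exp (- (real m ^ 2 * ln (real p)))) \<le> 4 / 2 ^ m"
proof -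
  have "exp (- (real m ^ 2 * ln (real p))) \<le> exp (- (real m * ln (real p)))"
    using m p by (simp add: power2_eq_square)
  also have "\<dots> = 1 / real p ^ m"
    using p by (simp add: exp_minus exp_of_nat_mult field_simps)
  finally have "real p * (2 * exp (- (real m ^ 2 * ln (real p)))) \<le> 2 / real p ^ (m - 1)"
    using p m by (cases m) (auto simp: field_simps)
  also have "\<dots> \<le> 2 / 2 ^ (m - 1)"
    using p by (intro divide_left_mono power_mono) auto
  also have "\<dots> = 4 / 2 ^ m"
    using m by (cases m) auto
  finally show ?thesis .
qed

section \<open>Moments of sub-Gaussian and masked variables\<close>

lemma (in prob_space) even_moment_le_mgf:
  fixes x :: "'a \<Rightarrow> real"
  assumes x: "x \<in> borel_measurable M" and t: "0 < t"
    and mgf: "\<And>t. integrable M (\<lambda>\<omega>. exp (t * x \<omega>)) \<and> (\<integral>\<omega>. exp (t * x \<omega>) \<partial>M) \<le> exp (v * t\<^sup>2 / 2)"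
  shows "integrable M (\<lambda>\<omega>. x \<omega> ^ (2*k))"
    and "(\<integral>\<omega>. x \<omega> ^ (2*k) \<partial>M) \<le> 2 * fact (2*k) / t ^ (2*k) * exp (v * t\<^sup>2 / 2)"
proof -
  define g where "g = (\<lambda>\<omega>. fact (2*k) / t ^ (2*k) * (exp (t * x \<omega>) + exp ((-t) * x \<omega>)))"
  have g: "integrable M g"
    unfolding g_def using mgf[of t] mgf[of "-t"] by auto
  have le_g: "x \<omega> ^ (2*k) \<le> g \<omega>" for \<omega>
    using even_power_le_exp_plus_exp[OF t, of "x \<omega>" k] by (simp add: g_def)
  show int: "integrable M (\<lambda>\<omega>. x \<omega> ^ (2*k))"
  proof (rule Bochner_Integration.integrable_bound[OF g])
    show "(\<lambda>\<omega>. x \<omega> ^ (2*k)) \<in> borel_measurable M"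
      using x by measurable
    show "AE \<omega> in M. norm (x \<omega> ^ (2*k)) \<le> norm (g \<omega>)"
      using le_g by (intro AE_I2) (simp add: power_mult order_trans[OF _ le_g])
  qed
  have "(\<integral>\<omega>. x \<omega> ^ (2*k) \<partial>M) \<le> (\<integral>\<omega>. g \<omega> \<partial>M)"
    by (rule integral_mono[OF int g]) (use le_g in auto)
  also have "\<dots> = fact (2*k) / t ^ (2*k) * ((\<integral>\<omega>. exp (t * x \<omega>) \<partial>M) + (\<integral>\<omega>. exp ((-t) * x \<omega>) \<partial>M))"
    unfolding g_def using mgf[of t] mgf[of "-t"] by simp
  also have "\<dots> \<le> fact (2*k) / t ^ (2*k) * (exp (v * t\<^sup>2 / 2) + exp (v * (-t)\<^sup>2 / 2))"
    using mgf[of t] mgf[of "-t"] t by (intro mult_left_mono add_mono) auto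
  finally show "(\<integral>\<omega>. x \<omega> ^ (2*k) \<partial>M) \<le> 2 * fact (2*k) / t ^ (2*k) * exp (v * t\<^sup>2 / 2)"
    by (simp add: mult_ac)
qed

text \<open>Take \<open>t = sqrt (2 k / v)\<close>, the minimiser of the bound in \<open>even_moment_le_mgf\<close>.\<close>

lemma (in prob_space) subgaussian_bernstein_moments:
  fixes x :: "'a \<Rightarrow> real"
  assumes x: "x \<in> borel_measurable M" and v: "0 < v"
    and mgf: "\<And>t. integrable M (\<lambda>\<omega>. exp (t * x \<omega>)) \<and> (\<integral>\<omega>. exp (t * x \<omega>) \<partial>M) \<le> exp (v * t\<^sup>2 / 2)"
  shows "bernstein_moments M (\<lambda>\<omega>. (x \<omega>)\<^sup>2) 2 (2 * exp 1 * v)"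
  unfolding bernstein_moments_def
proof (intro allI impI)
  fix k :: nat
  assume k: "1 \<le> k"
  define t where "t = sqrt (2 * real k / v)"
  have t: "0 < t" "t\<^sup>2 = 2 * real k / v"
    using v k by (simp_all add: t_def)
  have "2 * fact (2*k) / t ^ (2*k) * exp (v * t\<^sup>2 / 2) = 2 * (fact (2*k) * (v / (2 * real k)) ^ k * exp 1 ^ k)"
    using v k by (simp add: power_mult t(2) power_divide flip: exp_of_nat_mult)
  also have "\<dots> \<le> 2 * fact k * (2 * exp 1 * v) ^ k"
    using fact_double_mult_power_le[OF k v] by simp
  finally show "integrable M (\<lambda>\<omega>. ((x \<omega>)\<^sup>2) ^ k) \<and>
      (\<integral>\<omega>. ((x \<omega>)\<^sup>2) ^ k \<partial>M) \<le> 2 * fact k * (2 * exp 1 * v) ^ k"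
    using even_moment_le_mgf[OF x t(1) mgf, of k] by (simp add: power_mult)
qed

lemma subgaussian_vec_coordinate:
  assumes "subgaussian_vec M p x \<sigma>" and j: "j < p"
  shows "integrable M (\<lambda>\<omega>. exp (t * x \<omega> j)) \<and> (\<integral>\<omega>. exp (t * x \<omega> j) \<partial>M) \<le> exp (\<sigma>\<^sup>2 * t\<^sup>2 / 2)"
proof -
  define e where "e = (\<lambda>j'. if j' = j then 1 else (0::real))"
  have "(\<Sum>j'<p. (e j')\<^sup>2) = 1" and coord: "\<And>\<omega>. (\<Sum>j'<p. e j' * x \<omega> j') = x \<omega> j"
    using j by (simp_all add: e_def if_distrib[of "\<lambda>a. a\<^sup>2"] if_distrib[of "\<lambda>a. a * _"] cong: if_cong)
  with assms(1) have "integrable M (\<lambda>\<omega>. exp (t * (\<Sum>j'<p. e j' * x \<omega> j'))) \<and>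
      (\<integral>\<omega>. exp (t * (\<Sum>j'<p. e j' * x \<omega> j')) \<partial>M) \<le> exp (\<sigma>\<^sup>2 * t\<^sup>2 / 2)"
    unfolding subgaussian_vec_def by blast
  then show ?thesis
    by (simp only: coord)
qed

lemma (in prob_space) masked_square_power_integral:
  fixes X R :: "'a \<Rightarrow> real"
  assumes ind: "indep_var borel X borel R"
    and R01: "\<And>\<omega>. \<omega> \<in> space M \<Longrightarrow> R \<omega> \<in> {0, 1}"
    and Rp: "prob {\<omega> \<in> space M. R \<omega> = 1} = \<rho>"
    and k: "1 \<le> k" and XI: "integrable M (\<lambda>\<omega>. ((X \<omega>)\<^sup>2) ^ k)"
  shows "integrable M (\<lambda>\<omega>. ((R \<omega> * X \<omega> / \<rho>)\<^sup>2) ^ k)"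
    and "(\<integral>\<omega>. ((R \<omega> * X \<omega> / \<rho>)\<^sup>2) ^ k \<partial>M) = \<rho> * (\<integral>\<omega>. ((X \<omega>)\<^sup>2) ^ k \<partial>M) / \<rho> ^ (2*k)"
proof -
  have masked: "((R \<omega> * X \<omega> / \<rho>)\<^sup>2) ^ k = ((X \<omega>)\<^sup>2) ^ k * R \<omega> / \<rho> ^ (2*k)"
    if "\<omega> \<in> space M" for \<omega>
  proof -
    have "((R \<omega> * X \<omega> / \<rho>)\<^sup>2) ^ k = R \<omega> ^ (2*k) * ((X \<omega>)\<^sup>2) ^ k / \<rho> ^ (2*k)"
      by (simp add: power_mult power_mult_distrib power_divide)
    also have "R \<omega> ^ (2*k) = R \<omega>"
      using R01[OF that] k by auto
    finally show ?thesis
      by simp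
  qed
  have RI: "integrable M R"
  proof (rule integrable_const_bound[where B=1])
    show "AE \<omega> in M. norm (R \<omega>) \<le> 1"
      using R01 by (intro AE_I2) fastforce
  qed (use indep_var_rv2[OF ind] in simp)
  have ER: "(\<integral>\<omega>. R \<omega> \<partial>M) = \<rho>"
  proof -
    have "(\<integral>\<omega>. R \<omega> \<partial>M) = (\<integral>\<omega>. indicator {\<omega> \<in> space M. R \<omega> = 1} \<omega> \<partial>M)"
      by (rule Bochner_Integration.integral_cong[OF refl]) (use R01 in \<open>auto simp: indicator_def\<close>)
    then show ?thesis
      using Rp by (simp add: Int_absorb2 subset_eq)
  qed
  have "indep_var borel ((\<lambda>x. (x\<^sup>2) ^ k) \<circ> X) borel (id \<circ> R)"
    by (rule indep_var_compose[OF ind]) auto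
  then have ind_pow: "indep_var borel (\<lambda>\<omega>. ((X \<omega>)\<^sup>2) ^ k) borel R"
    by (simp add: comp_def id_def)
  show "integrable M (\<lambda>\<omega>. ((R \<omega> * X \<omega> / \<rho>)\<^sup>2) ^ k)"
    using indep_var_integrable[OF ind_pow XI RI]
    by (subst Bochner_Integration.integrable_cong[OF refl masked]) auto
  have "(\<integral>\<omega>. ((R \<omega> * X \<omega> / \<rho>)\<^sup>2) ^ k \<partial>M) = (\<integral>\<omega>. ((X \<omega>)\<^sup>2) ^ k * R \<omega> / \<rho> ^ (2*k) \<partial>M)"
    by (rule Bochner_Integration.integral_cong[OF refl masked])
  also have "\<dots> = \<rho> * (\<integral>\<omega>. ((X \<omega>)\<^sup>2) ^ k \<partial>M) / \<rho> ^ (2*k)"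
    using indep_var_lebesgue_integral[OF ind_pow XI RI] ER by simp
  finally show "(\<integral>\<omega>. ((R \<omega> * X \<omega> / \<rho>)\<^sup>2) ^ k \<partial>M) = \<rho> * (\<integral>\<omega>. ((X \<omega>)\<^sup>2) ^ k \<partial>M) / \<rho> ^ (2*k)" .
qed

lemma (in prob_space) bernstein_moments_masked_square:
  fixes X R :: "'a \<Rightarrow> real"
  assumes ind: "indep_var borel X borel R"
    and R01: "\<And>\<omega>. \<omega> \<in> space M \<Longrightarrow> R \<omega> \<in> {0, 1}"
    and Rp: "prob {\<omega> \<in> space M. R \<omega> = 1} = \<rho>" and \<rho>: "0 < \<rho>"
    and XB: "bernstein_moments M (\<lambda>\<omega>. (X \<omega>)\<^sup>2) c a"
  shows "bernstein_moments M (\<lambda>\<omega>. (R \<omega> * X \<omega> / \<rho>)\<^sup>2) (\<rho> * c) (a / \<rho>\<^sup>2)"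
    and "(\<integral>\<omega>. (R \<omega> * X \<omega> / \<rho>)\<^sup>2 \<partial>M) = (\<integral>\<omega>. (X \<omega>)\<^sup>2 \<partial>M) / \<rho>"
proof -
  show "bernstein_moments M (\<lambda>\<omega>. (R \<omega> * X \<omega> / \<rho>)\<^sup>2) (\<rho> * c) (a / \<rho>\<^sup>2)"
    unfolding bernstein_moments_def
  proof (intro allI impI conjI)
    fix k :: nat
    assume k: "1 \<le> k"
    have XI: "integrable M (\<lambda>\<omega>. ((X \<omega>)\<^sup>2) ^ k)" and XE: "(\<integral>\<omega>. ((X \<omega>)\<^sup>2) ^ k \<partial>M) \<le> c * fact k * a ^ k"
      using XB k by (auto simp: bernstein_moments_def)
    show "integrable M (\<lambda>\<omega>. ((R \<omega> * X \<omega> / \<rho>)\<^sup>2) ^ k)"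
      by (rule masked_square_power_integral(1)[OF ind R01 Rp k XI])
    have "(\<integral>\<omega>. ((R \<omega> * X \<omega> / \<rho>)\<^sup>2) ^ k \<partial>M) = \<rho> * (\<integral>\<omega>. ((X \<omega>)\<^sup>2) ^ k \<partial>M) / \<rho> ^ (2*k)"
      by (rule masked_square_power_integral(2)[OF ind R01 Rp k XI])
    also have "\<dots> \<le> \<rho> * (c * fact k * a ^ k) / \<rho> ^ (2*k)"
      using XE \<rho> by (intro divide_right_mono mult_left_mono) auto
    also have "\<dots> = \<rho> * c * fact k * (a / \<rho>\<^sup>2) ^ k"
      by (simp add: power_divide power_mult)
    finally show "(\<integral>\<omega>. ((R \<omega> * X \<omega> / \<rho>)\<^sup>2) ^ k \<partial>M) \<le> \<rho> * c * fact k * (a / \<rho>\<^sup>2) ^ k" .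
  qed
  have "integrable M (\<lambda>\<omega>. ((X \<omega>)\<^sup>2) ^ 1)"
    using XB unfolding bernstein_moments_def by blast
  moreover have "\<rho> * e / \<rho> ^ (2*1) = e / \<rho>" for e
    using \<rho> by (simp add: power2_eq_square)
  ultimately show "(\<integral>\<omega>. (R \<omega> * X \<omega> / \<rho>)\<^sup>2 \<partial>M) = (\<integral>\<omega>. (X \<omega>)\<^sup>2 \<partial>M) / \<rho>"
    using masked_square_power_integral(2)[OF ind R01 Rp, of 1] by simp
qed

section \<open>Bernstein's inequality\<close>

lemma (in prob_space) nn_integral_exp_series_term_le:
  fixes Z :: "'a \<Rightarrow> real"
  assumes Z0: "\<And>\<omega>. \<omega> \<in> space M \<Longrightarrow> 0 \<le> Z \<omega>"
    and ZB: "bernstein_moments M Z (2 * \<rho>) b" and s: "0 \<le> s"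
  shows "(\<integral>\<^sup>+\<omega>. ennreal ((s * Z \<omega>) ^ (k+2) / fact (k+2)) \<partial>M) \<le> ennreal (2 * \<rho> * (s * b)\<^sup>2 * (s * b) ^ k)"
proof -
  have "1 \<le> k + 2"
    by simp
  with ZB have ZI: "integrable M (\<lambda>\<omega>. Z \<omega> ^ (k+2))"
    and ZE: "(\<integral>\<omega>. Z \<omega> ^ (k+2) \<partial>M) \<le> 2 * \<rho> * fact (k+2) * b ^ (k+2)"
    unfolding bernstein_moments_def by blast+
  then have "integrable M (\<lambda>\<omega>. s ^ (k+2) * Z \<omega> ^ (k+2) / fact (k+2))"
    by (intro integrable_divide integrable_mult_right)
  then have "(\<integral>\<^sup>+\<omega>. ennreal ((s * Z \<omega>) ^ (k+2) / fact (k+2)) \<partial>M)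
      = ennreal (\<integral>\<omega>. (s * Z \<omega>) ^ (k+2) / fact (k+2) \<partial>M)"
    unfolding power_mult_distrib using Z0 s by (intro nn_integral_eq_integral) (auto intro!: AE_I2)
  also have "(\<integral>\<omega>. (s * Z \<omega>) ^ (k+2) / fact (k+2) \<partial>M) = s ^ (k+2) * (\<integral>\<omega>. Z \<omega> ^ (k+2) \<partial>M) / fact (k+2)"
    unfolding power_mult_distrib by simp
  also have "\<dots> \<le> s ^ (k+2) * (2 * \<rho> * fact (k+2) * b ^ (k+2)) / fact (k+2)"
    using ZE s by (intro divide_right_mono mult_left_mono) auto
  also have "\<dots> = 2 * \<rho> * (s * b)\<^sup>2 * (s * b) ^ k"
    by (simp add: power_mult_distrib power_add power2_eq_square)
  finally show ?thesis
    by (simp add: ennreal_leI)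
qed

lemma (in prob_space) nn_integral_exp_le_bernstein:
  fixes Z :: "'a \<Rightarrow> real"
  assumes Z: "Z \<in> borel_measurable M" and Z0: "\<And>\<omega>. \<omega> \<in> space M \<Longrightarrow> 0 \<le> Z \<omega>"
    and ZB: "bernstein_moments M Z (2 * \<rho>) b" and EZ: "(\<integral>\<omega>. Z \<omega> \<partial>M) = \<mu>"
    and \<rho>: "0 \<le> \<rho>" and s: "0 \<le> s" and b: "0 \<le> b" and sb: "s * b \<le> 1/2"
  shows "(\<integral>\<^sup>+\<omega>. ennreal (exp (s * Z \<omega>)) \<partial>M) \<le> ennreal (1 + s * \<mu> + 4 * \<rho> * (s * b)\<^sup>2)"
proof -
  define q where "q = s * b"
  have q: "0 \<le> q" "q \<le> 1/2"
    using s b sb by (auto simp: q_def)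
  define T where "T = (\<lambda>k \<omega>. (s * Z \<omega>) ^ (k+2) / fact (k+2))"
  have T0: "0 \<le> T k \<omega>" if "\<omega> \<in> space M" for k \<omega>
    using Z0[OF that] s by (simp add: T_def)
  have T: "(\<lambda>\<omega>. ennreal (T k \<omega>)) \<in> borel_measurable M" for k
    unfolding T_def using Z by measurable
  have series: "ennreal (exp (s * Z \<omega>)) = ennreal (1 + s * Z \<omega>) + (\<Sum>k. ennreal (T k \<omega>))"
    if \<omega>: "\<omega> \<in> space M" for \<omega>
  proof -
    have "(\<lambda>k. T k \<omega>) sums (exp (s * Z \<omega>) - 1 - s * Z \<omega>)"
      unfolding T_def by (rule exp_tail_sums)
    then have "(\<Sum>k. ennreal (T k \<omega>)) = ennreal (exp (s * Z \<omega>) - 1 - s * Z \<omega>)"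
      by (rule suminf_ennreal_eq[rotated]) (use T0 \<omega> in auto)
    moreover have "0 \<le> exp (s * Z \<omega>) - 1 - s * Z \<omega>"
      using exp_ge_add_one_self[of "s * Z \<omega>"] by linarith
    ultimately show ?thesis
      using Z0[OF \<omega>] s by (simp flip: ennreal_plus)
  qed
  have linear: "(\<integral>\<^sup>+\<omega>. ennreal (1 + s * Z \<omega>) \<partial>M) = ennreal (1 + s * \<mu>)"
  proof -
    have "integrable M (\<lambda>\<omega>. Z \<omega> ^ 1)"
      using ZB unfolding bernstein_moments_def by blast
    then have ZI: "integrable M Z"
      by simp
    then have "(\<integral>\<^sup>+\<omega>. ennreal (1 + s * Z \<omega>) \<partial>M) = ennreal (\<integral>\<omega>. 1 + s * Z \<omega> \<partial>M)"
      using Z0 s by (intro nn_integral_eq_integral) (auto intro!: AE_I2)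
    also have "(\<integral>\<omega>. 1 + s * Z \<omega> \<partial>M) = 1 + s * \<mu>"
      using ZI EZ by (simp add: prob_space)
    finally show ?thesis .
  qed
  have geometric: "(\<lambda>k. 2 * \<rho> * q\<^sup>2 * q ^ k) sums (2 * \<rho> * q\<^sup>2 * (1 / (1 - q)))"
    by (rule sums_mult[OF geometric_sums]) (use q in auto)
  have "(\<integral>\<^sup>+\<omega>. ennreal (exp (s * Z \<omega>)) \<partial>M)
      = (\<integral>\<^sup>+\<omega>. ennreal (1 + s * Z \<omega>) + (\<Sum>k. ennreal (T k \<omega>)) \<partial>M)"
    by (rule nn_integral_cong) (simp add: series)
  also have "\<dots> = (\<integral>\<^sup>+\<omega>. ennreal (1 + s * Z \<omega>) \<partial>M) + (\<integral>\<^sup>+\<omega>. (\<Sum>k. ennreal (T k \<omega>)) \<partial>M)"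
    using Z T by (intro nn_integral_add) auto
  also have "\<dots> = (\<integral>\<^sup>+\<omega>. ennreal (1 + s * Z \<omega>) \<partial>M) + (\<Sum>k. \<integral>\<^sup>+\<omega>. ennreal (T k \<omega>) \<partial>M)"
    by (simp only: nn_integral_suminf[OF T])
  also have "\<dots> \<le> ennreal (1 + s * \<mu>) + (\<Sum>k. ennreal (2 * \<rho> * q\<^sup>2 * q ^ k))"
    unfolding linear T_def q_def
    by (intro add_left_mono suminf_le nn_integral_exp_series_term_le[OF Z0 ZB s]) auto
  also have "(\<Sum>k. ennreal (2 * \<rho> * q\<^sup>2 * q ^ k)) = ennreal (2 * \<rho> * q\<^sup>2 * (1 / (1 - q)))"
    by (rule suminf_ennreal_eq[OF _ geometric]) (use \<rho> q in auto)
  also have "ennreal (1 + s * \<mu>) + \<dots> \<le> ennreal (1 + s * \<mu> + 4 * \<rho> * (s * b)\<^sup>2)"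
  proof -
    have "2 * \<rho> * q\<^sup>2 * (1 / (1 - q)) \<le> 2 * \<rho> * q\<^sup>2 * 2"
      using \<rho> q by (intro mult_left_mono) (auto simp: divide_le_eq)
    moreover have "0 \<le> 1 + s * \<mu>"
      using EZ Z0 s by (auto intro!: integral_nonneg_AE)
    ultimately show ?thesis
      using \<rho> q by (simp add: q_def flip: ennreal_plus)
  qed
  finally show ?thesis .
qed

text \<open>Bernstein's moment condition controls the moment generating function of \<open>Z - \<mu>\<close> on both
  sides: above by summing the exponential series against the geometric series of the moment
  bounds, below by the quadratic upper bound for \<open>exp (-y)\<close>.\<close>

lemma (in prob_space) nn_integral_exp_centered_le:
  fixes Z :: "'a \<Rightarrow> real"
  assumes Z: "Z \<in> borel_measurable M" and Z0: "\<And>\<omega>. \<omega> \<in> space M \<Longrightarrow> 0 \<le> Z \<omega>"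
    and ZB: "bernstein_moments M Z (2 * \<rho>) b" and EZ: "(\<integral>\<omega>. Z \<omega> \<partial>M) = \<mu>"
    and \<rho>: "0 \<le> \<rho>" and s: "0 \<le> s" and b: "0 \<le> b" and sb: "s * b \<le> 1/2"
  shows "(\<integral>\<^sup>+\<omega>. ennreal (exp (s * (Z \<omega> - \<mu>))) \<partial>M) \<le> ennreal (exp (4 * \<rho> * (s * b)\<^sup>2))"
proof -
  have "(\<integral>\<^sup>+\<omega>. ennreal (exp (s * (Z \<omega> - \<mu>))) \<partial>M) = ennreal (exp (- (s * \<mu>))) * (\<integral>\<^sup>+\<omega>. ennreal (exp (s * Z \<omega>)) \<partial>M)"
    using Z by (simp add: right_diff_distrib exp_diff exp_minus divide_inverse mult.commute ennreal_mult
        flip: nn_integral_cmult)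
  also have "\<dots> \<le> ennreal (exp (- (s * \<mu>))) * ennreal (1 + s * \<mu> + 4 * \<rho> * (s * b)\<^sup>2)"
    by (intro mult_left_mono nn_integral_exp_le_bernstein[OF Z Z0 ZB EZ \<rho> s b sb]) auto
  also have "\<dots> \<le> ennreal (exp (- (s * \<mu>)) * exp (s * \<mu> + 4 * \<rho> * (s * b)\<^sup>2))"
    by (simp add: ennreal_mult'[symmetric] ennreal_leI exp_ge_add_one_self add.assoc)
  also have "\<dots> = ennreal (exp (4 * \<rho> * (s * b)\<^sup>2))"
    by (simp flip: exp_add)
  finally show ?thesis .
qed

lemma (in prob_space) nn_integral_exp_centered_neg_le:
  fixes Z :: "'a \<Rightarrow> real"
  assumes Z0: "\<And>\<omega>. \<omega> \<in> space M \<Longrightarrow> 0 \<le> Z \<omega>"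
    and ZB: "bernstein_moments M Z (2 * \<rho>) b" and EZ: "(\<integral>\<omega>. Z \<omega> \<partial>M) = \<mu>"
    and s: "0 \<le> s"
  shows "(\<integral>\<^sup>+\<omega>. ennreal (exp (s * (\<mu> - Z \<omega>))) \<partial>M) \<le> ennreal (exp (2 * \<rho> * (s * b)\<^sup>2))"
proof -
  have ZI: "integrable M Z" "integrable M (\<lambda>\<omega>. (Z \<omega>)\<^sup>2)"
    and Z2: "(\<integral>\<omega>. (Z \<omega>)\<^sup>2 \<partial>M) \<le> 4 * \<rho> * b\<^sup>2"
    using ZB[unfolded bernstein_moments_def, rule_format, of 1]
      ZB[unfolded bernstein_moments_def, rule_format, of 2]
    by (auto simp: numeral_2_eq_2)
  define g where "g = (\<lambda>\<omega>. exp (s*\<mu>) * (1 - s * Z \<omega> + (s * Z \<omega>)\<^sup>2 / 2))"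
  have g0: "0 \<le> g \<omega>" for \<omega>
  proof -
    have "0 \<le> 1 - s * Z \<omega> + (s * Z \<omega>)\<^sup>2 / 2"
      using sum_squares_ge_zero[of "s * Z \<omega> - 1" 1] by (simp add: power2_eq_square algebra_simps)
    then show ?thesis
      by (simp add: g_def)
  qed
  have le_g: "exp (s * (\<mu> - Z \<omega>)) \<le> g \<omega>" if "\<omega> \<in> space M" for \<omega>
  proof -
    have "exp (s * (\<mu> - Z \<omega>)) = exp (s*\<mu>) * exp (-(s * Z \<omega>))"
      by (simp add: algebra_simps flip: exp_add)
    also have "\<dots> \<le> g \<omega>"
      unfolding g_def using exp_neg_le_quadratic[of "s * Z \<omega>"] Z0[OF that] s
      by (intro mult_left_mono) auto
    finally show ?thesis .
  qed
  have g: "integrable M g"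
    unfolding g_def power_mult_distrib using ZI by simp
  have "(\<integral>\<^sup>+\<omega>. ennreal (exp (s * (\<mu> - Z \<omega>))) \<partial>M) \<le> (\<integral>\<^sup>+\<omega>. ennreal (g \<omega>) \<partial>M)"
    by (rule nn_integral_mono) (use le_g in \<open>auto intro: ennreal_leI\<close>)
  also have "\<dots> = ennreal (\<integral>\<omega>. g \<omega> \<partial>M)"
    by (rule nn_integral_eq_integral[OF g]) (use g0 in auto)
  also have "(\<integral>\<omega>. g \<omega> \<partial>M) = exp (s*\<mu>) * (1 - s * \<mu> + s\<^sup>2 * (\<integral>\<omega>. (Z \<omega>)\<^sup>2 \<partial>M) / 2)"
    unfolding g_def power_mult_distrib using ZI EZ by (simp add: prob_space)
  also have "\<dots> \<le> exp (s*\<mu>) * (1 + (- s * \<mu> + 2 * \<rho> * (s * b)\<^sup>2))"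
    using mult_left_mono[OF Z2, of "s\<^sup>2"]
    by (intro mult_left_mono) (auto simp: power_mult_distrib mult_ac)
  also have "\<dots> \<le> exp (s*\<mu>) * exp (- s * \<mu> + 2 * \<rho> * (s * b)\<^sup>2)"
    by (intro mult_left_mono exp_ge_add_one_self) auto
  also have "\<dots> = exp (2 * \<rho> * (s * b)\<^sup>2)"
    by (simp flip: exp_add)
  finally show ?thesis
    by (simp add: ennreal_leI)
qed

lemma (in prob_space) chernoff_indep_sum:
  fixes W :: "'i \<Rightarrow> 'a \<Rightarrow> real"
  assumes I: "finite I" and ind: "indep_vars (\<lambda>_. borel) W I"
    and s: "0 < s" and B: "0 \<le> B"
    and mgf: "\<And>i. i \<in> I \<Longrightarrow> (\<integral>\<^sup>+\<omega>. ennreal (exp (s * W i \<omega>)) \<partial>M) \<le> ennreal B"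
  shows "prob {\<omega> \<in> space M. a \<le> (\<Sum>i\<in>I. W i \<omega>)} \<le> exp (- s * a) * B ^ card I"
proof -
  have S: "(\<lambda>\<omega>. (\<Sum>i\<in>I. W i \<omega>)) \<in> borel_measurable M"
    using ind by (intro borel_measurable_sum) (auto simp: indep_vars_def)
  have "ennreal (prob {\<omega> \<in> space M. a \<le> (\<Sum>i\<in>I. W i \<omega>)})
      \<le> ennreal (exp (- s * a)) * (\<integral>\<^sup>+\<omega>\<in>space M. ennreal (exp (s * (\<Sum>i\<in>I. W i \<omega>))) \<partial>M)"
    unfolding emeasure_eq_measure[symmetric] by (intro Chernoff_ineq_nn_integral_ge s) (use S in auto)
  also have "(\<integral>\<^sup>+\<omega>\<in>space M. ennreal (exp (s * (\<Sum>i\<in>I. W i \<omega>))) \<partial>M) =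
      (\<integral>\<^sup>+\<omega>. (\<Prod>i\<in>I. ennreal (exp (s * W i \<omega>))) \<partial>M)"
    by (intro nn_integral_cong) (simp_all add: sum_distrib_left exp_sum I prod_ennreal)
  also have "\<dots> = (\<Prod>i\<in>I. \<integral>\<^sup>+\<omega>. ennreal (exp (s * W i \<omega>)) \<partial>M)"
    by (intro indep_vars_nn_integral I indep_vars_compose2[OF ind]) auto
  also have "ennreal (exp (- s * a)) * \<dots> \<le> ennreal (exp (- s * a)) * (\<Prod>i\<in>I. ennreal B)"
    by (intro mult_left_mono prod_mono_ennreal mgf) auto
  also have "\<dots> = ennreal (exp (- s * a) * B ^ card I)"
    using B by (simp add: prod_ennreal ennreal_mult' ennreal_power)
  finally show ?thesis
    using B by (subst (asm) ennreal_le_iff) auto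
qed

lemma (in prob_space) bernstein_sum_tail:
  fixes Z :: "'i \<Rightarrow> 'a \<Rightarrow> real" and \<rho> b \<mu> s a :: real
  assumes I: "finite I" and ind: "indep_vars (\<lambda>_. borel) Z I"
    and Z0: "\<And>i \<omega>. i \<in> I \<Longrightarrow> \<omega> \<in> space M \<Longrightarrow> 0 \<le> Z i \<omega>"
    and ZB: "\<And>i. i \<in> I \<Longrightarrow> bernstein_moments M (Z i) (2 * \<rho>) b"
    and EZ: "\<And>i. i \<in> I \<Longrightarrow> (\<integral>\<omega>. Z i \<omega> \<partial>M) = \<mu>"
    and \<rho>: "0 \<le> \<rho>" and s: "0 < s" and b: "0 \<le> b" and sb: "s * b \<le> 1/2"
  shows "prob {\<omega> \<in> space M. a \<le> \<bar>\<Sum>i\<in>I. Z i \<omega> - \<mu>\<bar>}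
    \<le> 2 * exp (- s * a + card I * (4 * \<rho> * (s * b)\<^sup>2))"
proof -
  define B where "B = exp (4 * \<rho> * (s * b)\<^sup>2)"
  have Z: "\<And>i. i \<in> I \<Longrightarrow> Z i \<in> borel_measurable M"
    using ind by (auto simp: indep_vars_def)
  have "exp (- s * a) * B ^ card I = exp (- s * a + card I * (4 * \<rho> * (s * b)\<^sup>2))"
    by (simp add: B_def exp_of_nat_mult[symmetric] algebra_simps flip: exp_add)
  moreover have "prob {\<omega> \<in> space M. a \<le> (\<Sum>i\<in>I. Z i \<omega> - \<mu>)} \<le> exp (- s * a) * B ^ card I"
    using nn_integral_exp_centered_le[OF Z Z0 ZB EZ \<rho> _ b sb] s
    by (intro chernoff_indep_sum[OF I _ s] indep_vars_compose2[OF ind]) (auto simp: B_def)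
  moreover have "prob {\<omega> \<in> space M. a \<le> (\<Sum>i\<in>I. \<mu> - Z i \<omega>)} \<le> exp (- s * a) * B ^ card I"
  proof (intro chernoff_indep_sum[OF I _ s] indep_vars_compose2[OF ind])
    fix i assume "i \<in> I"
    have "(\<integral>\<^sup>+\<omega>. ennreal (exp (s * (\<mu> - Z i \<omega>))) \<partial>M) \<le> ennreal (exp (2 * \<rho> * (s * b)\<^sup>2))"
      using nn_integral_exp_centered_neg_le[OF Z0 ZB EZ, of i s] \<open>i \<in> I\<close> s by auto
    also have "\<dots> \<le> ennreal B"
      using \<rho> by (simp add: B_def ennreal_leI)
    finally show "(\<integral>\<^sup>+\<omega>. ennreal (exp (s * (\<mu> - Z i \<omega>))) \<partial>M) \<le> ennreal B" .
  qed (auto simp: B_def)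
  moreover have "{\<omega> \<in> space M. a \<le> \<bar>\<Sum>i\<in>I. Z i \<omega> - \<mu>\<bar>}
      \<subseteq> {\<omega> \<in> space M. a \<le> (\<Sum>i\<in>I. Z i \<omega> - \<mu>)} \<union> {\<omega> \<in> space M. a \<le> (\<Sum>i\<in>I. \<mu> - Z i \<omega>)}"
    by (auto simp: sum_subtractf abs_if)
  then have "prob {\<omega> \<in> space M. a \<le> \<bar>\<Sum>i\<in>I. Z i \<omega> - \<mu>\<bar>}
      \<le> prob {\<omega> \<in> space M. a \<le> (\<Sum>i\<in>I. Z i \<omega> - \<mu>)} + prob {\<omega> \<in> space M. a \<le> (\<Sum>i\<in>I. \<mu> - Z i \<omega>)}"
    using Z by (intro order_trans[OF finite_measure_mono measure_Un_le]) auto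
  ultimately show ?thesis
    by linarith
qed

lemma (in prob_space) masked_column_deviation_tail:
  fixes X R :: "'a \<Rightarrow> nat \<Rightarrow> real" and \<rho> r a w c :: real
  assumes n: "1 \<le> n"
    and ind: "indep_vars (\<lambda>_. borel) (\<lambda>i \<omega>. (R \<omega> i * X \<omega> i / \<rho>)\<^sup>2) {..<n}"
    and XR: "\<And>i. i < n \<Longrightarrow> indep_var borel (\<lambda>\<omega>. X \<omega> i) borel (\<lambda>\<omega>. R \<omega> i)"
    and R01: "\<And>i \<omega>. i < n \<Longrightarrow> \<omega> \<in> space M \<Longrightarrow> R \<omega> i \<in> {0, 1}"
    and Rp: "\<And>i. i < n \<Longrightarrow> prob {\<omega> \<in> space M. R \<omega> i = 1} = \<rho>"
    and XB: "\<And>i. i < n \<Longrightarrow> bernstein_moments M (\<lambda>\<omega>. (X \<omega> i)\<^sup>2) 2 a"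
    and EX: "\<And>i. i < n \<Longrightarrow> (\<integral>\<omega>. (X \<omega> i)\<^sup>2 \<partial>M) = c"
    and r: "0 < r" "r \<le> \<rho>" "\<rho> \<le> 1" and a: "0 < a" and w: "0 < w" and wr: "w * r \<le> 4 * a"
  shows "prob {\<omega> \<in> space M. w < \<bar>(1 - \<rho>) * ((1 / real n) * (\<Sum>i<n. (R \<omega> i * X \<omega> i / \<rho>)\<^sup>2))
      - (1 / \<rho> - 1) * c\<bar>} \<le> 2 * exp (- (real n * w\<^sup>2 * r ^ 3 / (16 * a\<^sup>2)))"
proof -
  define Z where "Z = (\<lambda>i \<omega>. (R \<omega> i * X \<omega> i / \<rho>)\<^sup>2)"
  define s where "s = w * r ^ 3 / (8 * a\<^sup>2)"
  note s = bernstein_parameter_choice[OF r(1,2) a w wr, folded s_def]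
  have \<rho>: "0 < \<rho>"
    using r by simp
  have ZB: "bernstein_moments M (Z i) (2 * \<rho>) (a / \<rho>\<^sup>2)" and EZ: "(\<integral>\<omega>. Z i \<omega> \<partial>M) = c / \<rho>"
    if "i < n" for i
    using bernstein_moments_masked_square[OF XR[OF that] R01[OF that] Rp[OF that] \<rho> XB[OF that]]
      EX[OF that] by (simp_all add: Z_def mult.commute)
  have "{\<omega> \<in> space M. w < \<bar>(1 - \<rho>) * ((1 / real n) * (\<Sum>i<n. Z i \<omega>)) - (1 / \<rho> - 1) * c\<bar>}
      \<subseteq> {\<omega> \<in> space M. real n * w \<le> \<bar>\<Sum>i<n. Z i \<omega> - c / \<rho>\<bar>}"
  proof safe
    fix \<omega>
    assume "w < \<bar>(1 - \<rho>) * ((1 / real n) * (\<Sum>i<n. Z i \<omega>)) - (1 / \<rho> - 1) * c\<bar>"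
    also have "\<dots> \<le> \<bar>\<Sum>i<n. Z i \<omega> - c / \<rho>\<bar> / real n"
      using abs_masked_deviation_le[OF \<rho> r(3), of "real n"] n by (simp add: sum_subtractf)
    finally show "real n * w \<le> \<bar>\<Sum>i<n. Z i \<omega> - c / \<rho>\<bar>"
      using n by (simp add: field_simps)
  qed
  moreover have "(\<lambda>\<omega>. \<bar>\<Sum>i<n. Z i \<omega> - c / \<rho>\<bar>) \<in> borel_measurable M"
    using ind by (intro borel_measurable_abs borel_measurable_sum borel_measurable_diff)
      (auto simp: Z_def indep_vars_def)
  then have "{\<omega> \<in> space M. real n * w \<le> \<bar>\<Sum>i<n. Z i \<omega> - c / \<rho>\<bar>} \<in> events"
    by measurable
  ultimately have "prob {\<omega> \<in> space M. w < \<bar>(1 - \<rho>) * ((1 / real n) * (\<Sum>i<n. Z i \<omega>)) - (1 / \<rho> - 1) * c\<bar>}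
      \<le> prob {\<omega> \<in> space M. real n * w \<le> \<bar>\<Sum>i<n. Z i \<omega> - c / \<rho>\<bar>}"
    by (intro finite_measure_mono)
  also have "\<dots> \<le> 2 * exp (- s * (real n * w) + real n * (4 * \<rho> * (s * (a / \<rho>\<^sup>2))\<^sup>2))"
    using bernstein_sum_tail[of "{..<n}" Z, OF _ _ _ ZB EZ _ s(1) _ s(2)] ind \<rho> a
    by (simp add: Z_def)
  also have "\<dots> \<le> 2 * exp (- (real n * w\<^sup>2 * r ^ 3 / (16 * a\<^sup>2)))"
    using s(3)[of n] by simp
  finally show ?thesis
    by (simp add: Z_def)
qed

lemma (in prob_space) indep_vars_prob_all_in:
  assumes ind: "indep_vars (\<lambda>_. borel) U I" and J: "finite J" "J \<subseteq> I"
    and B: "\<And>i. i \<in> J \<Longrightarrow> B i \<in> sets borel"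
  shows "prob {\<omega> \<in> space M. \<forall>i\<in>J. U i \<omega> \<in> B i} = (\<Prod>i\<in>J. prob (U i -` B i \<inter> space M))"
proof (cases "J = {}")
  case True
  then show ?thesis
    by (simp add: prob_space)
next
  case False
  then have "{\<omega> \<in> space M. \<forall>i\<in>J. U i \<omega> \<in> B i} = (\<Inter>i\<in>J. U i -` B i \<inter> space M)"
    by auto
  then show ?thesis
    using indep_varsD[OF ind False J, of B] B by simp
qed

lemma (in prob_space) indep_vars_case_sum:
  fixes U :: "'i \<Rightarrow> 'a \<Rightarrow> real" and V :: "'k \<Rightarrow> 'a \<Rightarrow> real"
  assumes iU: "indep_vars (\<lambda>_. borel) U I1" and iV: "indep_vars (\<lambda>_. borel) V I2"
    and joint: "\<And>Ja Jb BU BV. finite Ja \<Longrightarrow> Ja \<subseteq> I1 \<Longrightarrow> finite Jb \<Longrightarrow> Jb \<subseteq> I2 \<Longrightarrow>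
        (\<And>i. i \<in> Ja \<Longrightarrow> BU i \<in> sets borel) \<Longrightarrow> (\<And>k. k \<in> Jb \<Longrightarrow> BV k \<in> sets borel) \<Longrightarrow>
        prob ({\<omega> \<in> space M. \<forall>i\<in>Ja. U i \<omega> \<in> BU i} \<inter> {\<omega> \<in> space M. \<forall>k\<in>Jb. V k \<omega> \<in> BV k}) =
        prob {\<omega> \<in> space M. \<forall>i\<in>Ja. U i \<omega> \<in> BU i} * prob {\<omega> \<in> space M. \<forall>k\<in>Jb. V k \<omega> \<in> BV k}"
  shows "indep_vars (\<lambda>_. borel) (case_sum U V) (Inl ` I1 \<union> Inr ` I2)"
  unfolding indep_vars_def2
proof (intro conjI ballI indep_setsI)
  fix x
  assume "x \<in> Inl ` I1 \<union> Inr ` I2"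
  then show "random_variable borel (case_sum U V x)"
    using iU iV unfolding indep_vars_def by auto
  then show "{case_sum U V x -` A \<inter> space M | A. A \<in> sets borel} \<subseteq> events"
    by (auto intro!: measurable_sets[of _ M borel])
next
  fix A J
  assume J: "J \<noteq> {}" "J \<subseteq> Inl ` I1 \<union> Inr ` I2" "finite J"
    and A: "\<forall>j\<in>J. A j \<in> {case_sum U V j -` A \<inter> space M | A. A \<in> sets borel}"
  define Ja where "Ja = Inl -` J"
  define Jb where "Jb = Inr -` J"
  have Ja: "finite Ja" "Ja \<subseteq> I1" and Jb: "finite Jb" "Jb \<subseteq> I2"
    using J by (auto simp: Ja_def Jb_def intro!: finite_vimageI)
  have J_eq: "J = Inl ` Ja \<union> Inr ` Jb"
    by (auto simp: Ja_def Jb_def image_iff) (metis sum.exhaust)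
  have "\<forall>i\<in>Ja. \<exists>B. B \<in> sets borel \<and> A (Inl i) = U i -` B \<inter> space M"
    using A by (force simp: Ja_def)
  then obtain BU where BU: "\<And>i. i \<in> Ja \<Longrightarrow> BU i \<in> sets borel"
    "\<And>i. i \<in> Ja \<Longrightarrow> A (Inl i) = U i -` BU i \<inter> space M"
    by metis
  have "\<forall>k\<in>Jb. \<exists>B. B \<in> sets borel \<and> A (Inr k) = V k -` B \<inter> space M"
    using A by (force simp: Jb_def)
  then obtain BV where BV: "\<And>k. k \<in> Jb \<Longrightarrow> BV k \<in> sets borel"
    "\<And>k. k \<in> Jb \<Longrightarrow> A (Inr k) = V k -` BV k \<inter> space M"
    by metis
  have "(\<Inter>j\<in>J. A j) = {\<omega> \<in> space M. \<forall>i\<in>Ja. U i \<omega> \<in> BU i} \<inter> {\<omega> \<in> space M. \<forall>k\<in>Jb. V k \<omega> \<in> BV k}"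
  proof -
    have "\<And>i \<omega>. i \<in> Ja \<Longrightarrow> \<omega> \<in> A (Inl i) \<longleftrightarrow> \<omega> \<in> space M \<and> U i \<omega> \<in> BU i"
      "\<And>k \<omega>. k \<in> Jb \<Longrightarrow> \<omega> \<in> A (Inr k) \<longleftrightarrow> \<omega> \<in> space M \<and> V k \<omega> \<in> BV k"
      by (auto simp: BU(2) BV(2))
    then show ?thesis
      using J(1) unfolding J_eq by (auto simp: ball_Un)
  qed
  then have "prob (\<Inter>j\<in>J. A j) = (\<Prod>i\<in>Ja. prob (A (Inl i))) * (\<Prod>k\<in>Jb. prob (A (Inr k)))"
    using joint[OF Ja Jb BU(1) BV(1)] indep_vars_prob_all_in[OF iU Ja BU(1)]
      indep_vars_prob_all_in[OF iV Jb BV(1)] by (simp add: BU(2) BV(2))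
  also have "\<dots> = (\<Prod>j\<in>J. prob (A j))"
    unfolding J_eq using Ja Jb by (subst prod.union_disjoint) (auto simp: prod.reindex)
  finally show "prob (\<Inter>j\<in>J. A j) = (\<Prod>j\<in>J. prob (A j))" .
qed

lemma (in prob_space) indep_vars_pairs:
  fixes W :: "'j \<Rightarrow> 'a \<Rightarrow> real" and g :: "real \<Rightarrow> real \<Rightarrow> real"
  assumes ind: "indep_vars (\<lambda>_. borel) W J"
    and J: "\<And>i. i \<in> I \<Longrightarrow> {a i, b i} \<subseteq> J" and disj: "disjoint_family_on (\<lambda>i. {a i, b i}) I"
    and g: "case_prod g \<in> borel_measurable (borel \<Otimes>\<^sub>M borel)"
  shows "indep_vars (\<lambda>_. borel) (\<lambda>i \<omega>. g (W (a i) \<omega>) (W (b i) \<omega>)) I"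
proof -
  have "indep_vars (\<lambda>i. PiM {a i, b i} (\<lambda>_. borel)) (\<lambda>i \<omega>. restrict (\<lambda>j. W j \<omega>) {a i, b i}) I"
    by (rule indep_vars_restrict[OF ind J disj])
  moreover have "(\<lambda>m. g (m (a i)) (m (b i))) \<in> borel_measurable (PiM {a i, b i} (\<lambda>_. borel))" for i
  proof -
    have "(\<lambda>m. m (a i)) \<in> borel_measurable (PiM {a i, b i} (\<lambda>_. borel))"
      "(\<lambda>m. m (b i)) \<in> borel_measurable (PiM {a i, b i} (\<lambda>_. borel))"
      by (auto intro!: measurable_component_singleton)
    from measurable_compose[OF measurable_Pair[OF this] g] show ?thesis
      by simp
  qed
  ultimately have "indep_vars (\<lambda>_. borel)
      (\<lambda>i \<omega>. (\<lambda>m. g (m (a i)) (m (b i))) (restrict (\<lambda>j. W j \<omega>) {a i, b i})) I"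
    by (rule indep_vars_compose2)
  then show ?thesis
    by simp
qed

lemma (in prob_space) prob_abs_Max_gt_le_sum:
  fixes Y :: "'j \<Rightarrow> 'a \<Rightarrow> real"
  assumes J: "finite J" "J \<noteq> {}" and Y: "\<And>j. j \<in> J \<Longrightarrow> Y j \<in> borel_measurable M"
    and Y0: "\<And>j \<omega>. j \<in> J \<Longrightarrow> 0 \<le> Y j \<omega>"
  shows "prob {\<omega> \<in> space M. w < \<bar>Max ((\<lambda>j. Y j \<omega>) ` J)\<bar>} \<le> (\<Sum>j\<in>J. prob {\<omega> \<in> space M. w < Y j \<omega>})"
proof -
  have events: "\<And>j. j \<in> J \<Longrightarrow> {\<omega> \<in> space M. w < Y j \<omega>} \<in> events"
    using Y by measurable
  have "{\<omega> \<in> space M. w < \<bar>Max ((\<lambda>j. Y j \<omega>) ` J)\<bar>} \<subseteq> (\<Union>j\<in>J. {\<omega> \<in> space M. w < Y j \<omega>})"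
  proof safe
    fix \<omega>
    assume "\<omega> \<in> space M" "w < \<bar>Max ((\<lambda>j. Y j \<omega>) ` J)\<bar>"
    moreover have "Max ((\<lambda>j. Y j \<omega>) ` J) \<in> (\<lambda>j. Y j \<omega>) ` J"
      using J by (intro Max_in) auto
    then obtain j where "j \<in> J" "Max ((\<lambda>j. Y j \<omega>) ` J) = Y j \<omega>"
      by auto
    ultimately show "\<omega> \<in> (\<Union>j\<in>J. {\<omega> \<in> space M. w < Y j \<omega>})"
      using Y0[of j \<omega>] by auto
  qed
  then have "prob {\<omega> \<in> space M. w < \<bar>Max ((\<lambda>j. Y j \<omega>) ` J)\<bar>} \<le> prob (\<Union>j\<in>J. {\<omega> \<in> space M. w < Y j \<omega>})"
    using events J by (intro finite_measure_mono) auto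
  also have "\<dots> \<le> (\<Sum>j\<in>J. prob {\<omega> \<in> space M. w < Y j \<omega>})"
    using events J by (intro measure_UNION_le) auto
  finally show ?thesis .
qed

section \<open>The masked design at a fixed sample size\<close>

locale masked_design = prob_space M
  for M :: "'a measure" and p n :: nat and X R :: "'a \<Rightarrow> nat \<Rightarrow> nat \<Rightarrow> real"
    and \<Sigma> :: "nat \<Rightarrow> nat \<Rightarrow> real" and \<sigma> :: real and \<rho> :: "nat \<Rightarrow> real" +
  assumes p_ge2: "2 \<le> p" and n_pos: "1 \<le> n"
    and rows_indep: "indep_vars (\<lambda>_. PiM {..<p} (\<lambda>_. borel))
      (\<lambda>i \<omega>. restrict (\<lambda>j. X \<omega> i j) {..<p}) {..<n}"
    and rows_cov: "\<And>i. i < n \<Longrightarrow> mean_zero_cov M p (\<lambda>\<omega> j. X \<omega> i j) \<Sigma>"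
    and rows_subg: "\<And>i. i < n \<Longrightarrow> subgaussian_vec M p (\<lambda>\<omega> j. X \<omega> i j) \<sigma>"
    and rho_pos: "\<And>j. j < p \<Longrightarrow> 0 < \<rho> j \<and> \<rho> j \<le> 1"
    and R_indep: "indep_vars (\<lambda>_. borel) (\<lambda>(i, j) \<omega>. R \<omega> i j) ({..<n} \<times> {..<p})"
    and R_01: "\<And>i j \<omega>. i < n \<Longrightarrow> j < p \<Longrightarrow> \<omega> \<in> space M \<Longrightarrow> R \<omega> i j \<in> {0, 1}"
    and R_bern: "\<And>i j. i < n \<Longrightarrow> j < p \<Longrightarrow> prob {\<omega> \<in> space M. R \<omega> i j = 1} = \<rho> j"
    and XR_indep: "indep_var
      (PiM ({..<n} \<times> {..<p}) (\<lambda>_. borel)) (\<lambda>\<omega>. restrict (\<lambda>(i, j). X \<omega> i j) ({..<n} \<times> {..<p}))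
      (PiM ({..<n} \<times> {..<p}) (\<lambda>_. borel)) (\<lambda>\<omega>. restrict (\<lambda>(i, j). R \<omega> i j) ({..<n} \<times> {..<p}))"
begin

text \<open>\<open>deviation j\<close> is the absolute value of the \<open>j\<close>-th diagonal entry of
  \<open>D diag (X\<^sup>\<sim>\<^sup>T X\<^sup>\<sim> / n) - D\<^sup>\<sim> diag \<Sigma>\<^sub>0\<close>.\<close>

abbreviation deviation :: "nat \<Rightarrow> 'a \<Rightarrow> real" where
  "deviation j \<omega> \<equiv> \<bar>(1 - \<rho> j) * ((1 / real n) * (\<Sum>i<n. (R \<omega> i j * X \<omega> i j / \<rho> j)\<^sup>2))
    - (1 / \<rho> j - 1) * \<Sigma> j j\<bar>"

lemma indep_vars_X_column:
  assumes "j < p"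
  shows "indep_vars (\<lambda>_. borel) (\<lambda>i \<omega>. X \<omega> i j) {..<n}"
proof -
  have "indep_vars (\<lambda>_. borel) (\<lambda>i \<omega>. (\<lambda>m. m j) (restrict (\<lambda>j. X \<omega> i j) {..<p})) {..<n}"
    by (rule indep_vars_compose2[OF rows_indep]) (use assms in auto)
  then show ?thesis
    using assms by simp
qed

lemma X_measurable: "i < n \<Longrightarrow> j < p \<Longrightarrow> (\<lambda>\<omega>. X \<omega> i j) \<in> borel_measurable M"
  using indep_vars_X_column by (auto simp: indep_vars_def)

lemma R_measurable: "i < n \<Longrightarrow> j < p \<Longrightarrow> (\<lambda>\<omega>. R \<omega> i j) \<in> borel_measurable M"
  using R_indep by (auto simp: indep_vars_def)

lemma deviation_measurable: "j < p \<Longrightarrow> deviation j \<in> borel_measurable M"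
  using X_measurable R_measurable
  by (intro borel_measurable_abs borel_measurable_diff borel_measurable_times
      borel_measurable_sum borel_measurable_power borel_measurable_divide) auto

lemma indep_var_entry:
  assumes ij: "i < n" "j < p"
  shows "indep_var borel (\<lambda>\<omega>. X \<omega> i j) borel (\<lambda>\<omega>. R \<omega> i j)"
proof -
  have "indep_var borel ((\<lambda>m. m (i, j)) \<circ> (\<lambda>\<omega>. restrict (\<lambda>(i, j). X \<omega> i j) ({..<n} \<times> {..<p})))
      borel ((\<lambda>m. m (i, j)) \<circ> (\<lambda>\<omega>. restrict (\<lambda>(i, j). R \<omega> i j) ({..<n} \<times> {..<p})))"
    by (rule indep_var_compose[OF XR_indep]) (use ij in auto)
  then show ?thesis
    using ij by (simp add: comp_def)
qed

lemma prob_X_column_R_cylinders: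
  assumes j: "j < p" and Ja: "Ja \<subseteq> {..<n}" and Jb: "Jb \<subseteq> {..<n} \<times> {..<p}"
    and BU: "\<And>i. i \<in> Ja \<Longrightarrow> BU i \<in> sets borel" and BV: "\<And>k. k \<in> Jb \<Longrightarrow> BV k \<in> sets borel"
  shows "prob ({\<omega> \<in> space M. \<forall>i\<in>Ja. X \<omega> i j \<in> BU i} \<inter> {\<omega> \<in> space M. \<forall>k\<in>Jb. R \<omega> (fst k) (snd k) \<in> BV k})
    = prob {\<omega> \<in> space M. \<forall>i\<in>Ja. X \<omega> i j \<in> BU i} * prob {\<omega> \<in> space M. \<forall>k\<in>Jb. R \<omega> (fst k) (snd k) \<in> BV k}"
proof -
  define K where "K = {..<n} \<times> {..<p}"
  define CU where "CU = {m \<in> space (PiM K (\<lambda>_. borel :: real measure)). \<forall>i\<in>Ja. m (i, j) \<in> BU i}"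
  define CV where "CV = {m \<in> space (PiM K (\<lambda>_. borel :: real measure)). \<forall>k\<in>Jb. m k \<in> BV k}"
  have "\<And>i. i \<in> Ja \<Longrightarrow> (\<lambda>m. m (i, j)) \<in> PiM K (\<lambda>_. borel :: real measure) \<rightarrow>\<^sub>M borel"
    using Ja j by (intro measurable_component_singleton) (auto simp: K_def)
  then have CU: "CU \<in> sets (PiM K (\<lambda>_. borel))"
    unfolding CU_def using BU by measurable
  have "\<And>k. k \<in> Jb \<Longrightarrow> (\<lambda>m. m k) \<in> PiM K (\<lambda>_. borel :: real measure) \<rightarrow>\<^sub>M borel"
    using Jb by (intro measurable_component_singleton) (auto simp: K_def)
  then have CV: "CV \<in> sets (PiM K (\<lambda>_. borel))"
    unfolding CV_def using BV by measurable
  have eU: "(\<lambda>\<omega>. restrict (\<lambda>(i, j). X \<omega> i j) K) -` CU \<inter> space M = {\<omega> \<in> space M. \<forall>i\<in>Ja. X \<omega> i j \<in> BU i}"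
    and eV: "(\<lambda>\<omega>. restrict (\<lambda>(i, j). R \<omega> i j) K) -` CV \<inter> space M
      = {\<omega> \<in> space M. \<forall>k\<in>Jb. R \<omega> (fst k) (snd k) \<in> BV k}"
    using Ja Jb j by (auto simp: CU_def CV_def space_PiM K_def subset_eq split: prod.splits)
  then have "(\<lambda>\<omega>. (restrict (\<lambda>(i, j). X \<omega> i j) K, restrict (\<lambda>(i, j). R \<omega> i j) K)) -` (CU \<times> CV) \<inter> space M
      = {\<omega> \<in> space M. \<forall>i\<in>Ja. X \<omega> i j \<in> BU i} \<inter> {\<omega> \<in> space M. \<forall>k\<in>Jb. R \<omega> (fst k) (snd k) \<in> BV k}"
    by auto
  with indep_varD[OF XR_indep[folded K_def] CU CV] show ?thesis
    unfolding eU eV by simp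
qed

text \<open>Within a column the masked entries are independent across rows: the column of \<open>X\<close> and
  the whole mask \<open>R\<close> form one independent family, and row \<open>i\<close> only uses its members
  \<open>X i j\<close> and \<open>R i j\<close>.\<close>

lemma indep_vars_masked_column:
  assumes j: "j < p"
  shows "indep_vars (\<lambda>_. borel) (\<lambda>i \<omega>. (R \<omega> i j * X \<omega> i j / c)\<^sup>2) {..<n}"
proof -
  define U where "U = (\<lambda>i \<omega>. X \<omega> i j)"
  define V where "V = (\<lambda>k \<omega>. R \<omega> (fst k) (snd k))"
  have "indep_vars (\<lambda>_. borel) V ({..<n} \<times> {..<p})"
    using R_indep by (simp add: V_def case_prod_beta')
  then have ind: "indep_vars (\<lambda>_. borel) (case_sum U V) (Inl ` {..<n} \<union> Inr ` ({..<n} \<times> {..<p}))"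
    using indep_vars_X_column[OF j] prob_X_column_R_cylinders[OF j] unfolding U_def V_def
    by (intro indep_vars_case_sum) auto
  have "(\<lambda>(x, r). (r * x / c)\<^sup>2) \<in> borel_measurable (borel \<Otimes>\<^sub>M borel)"
    by measurable
  from indep_vars_pairs[OF ind _ _ this, of "{..<n}" Inl "\<lambda>i. Inr (i, j)"] j
  show ?thesis
    by (auto simp: U_def V_def disjoint_family_on_def)
qed

lemma column_second_moment:
  assumes "i < n" "j < p"
  shows "integrable M (\<lambda>\<omega>. (X \<omega> i j)\<^sup>2)" and "(\<integral>\<omega>. (X \<omega> i j)\<^sup>2 \<partial>M) = \<Sigma> j j"
  using rows_cov[OF assms(1)] assms(2) by (simp_all add: mean_zero_cov_def power2_eq_square)

lemma column_bernstein_moments: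
  assumes "i < n" "j < p" and "0 < v" and "\<sigma>\<^sup>2 \<le> v"
  shows "bernstein_moments M (\<lambda>\<omega>. (X \<omega> i j)\<^sup>2) 2 (2 * exp 1 * v)"
proof (rule subgaussian_bernstein_moments[OF X_measurable[OF assms(1,2)] assms(3)])
  fix t :: real
  have "exp (\<sigma>\<^sup>2 * t\<^sup>2 / 2) \<le> exp (v * t\<^sup>2 / 2)"
    using assms(4) by (simp add: mult_right_mono)
  then show "integrable M (\<lambda>\<omega>. exp (t * X \<omega> i j)) \<and> (\<integral>\<omega>. exp (t * X \<omega> i j) \<partial>M) \<le> exp (v * t\<^sup>2 / 2)"
    using subgaussian_vec_coordinate[OF rows_subg[OF assms(1)] assms(2), of t] order_trans by blast
qed

lemma Min_rho: "0 < Min (\<rho> ` {..<p})" "j < p \<Longrightarrow> Min (\<rho> ` {..<p}) \<le> \<rho> j"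
proof -
  have "\<rho> ` {..<p} \<noteq> {}"
    using p_ge2 by (auto simp: lessThan_empty_iff)
  then show "0 < Min (\<rho> ` {..<p})" "j < p \<Longrightarrow> Min (\<rho> ` {..<p}) \<le> \<rho> j"
    using rho_pos by (auto simp: Min_gr_iff)
qed

lemma prob_column_deviation_tail:
  assumes j: "j < p" and \<sigma>: "\<sigma> \<noteq> 0" and w: "0 < w"
    and wr: "w * Min (\<rho> ` {..<p}) \<le> 8 * exp 1 * \<sigma>\<^sup>2"
  shows "prob {\<omega> \<in> space M. w < deviation j \<omega>}
    \<le> 2 * exp (- (real n * w\<^sup>2 * Min (\<rho> ` {..<p}) ^ 3 / (16 * (2 * exp 1 * \<sigma>\<^sup>2)\<^sup>2)))"
proof -
  have "\<And>i. i < n \<Longrightarrow> bernstein_moments M (\<lambda>\<omega>. (X \<omega> i j)\<^sup>2) 2 (2 * exp 1 * \<sigma>\<^sup>2)"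
    using j \<sigma> by (intro column_bernstein_moments) auto
  from masked_column_deviation_tail[where X = "\<lambda>\<omega> i. X \<omega> i j" and R = "\<lambda>\<omega> i. R \<omega> i j",
      OF n_pos indep_vars_masked_column[OF j] indep_var_entry _ _ this column_second_moment(2)
      Min_rho(1) Min_rho(2)[OF j] _ _ w]
  show ?thesis
    using j rho_pos[OF j] R_01 R_bern \<sigma> wr by simp
qed

lemma prob_max_deviation_tail:
  assumes \<sigma>: "\<sigma> \<noteq> 0" and C: "0 < C"
    and rate: "C\<^sup>2 * (ln (real p) / (Min (\<rho> ` {..<p}) * real n)) \<le> 64 * (exp 1)\<^sup>2"
  shows "prob {\<omega> \<in> space M. C * (\<sigma>\<^sup>2 * sqrt (ln (real p) / (Min (\<rho> ` {..<p}) ^ 3 * real n)))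
      < \<bar>Max ((\<lambda>j. deviation j \<omega>) ` {..<p})\<bar>} \<le> real p * (2 * exp (- (C\<^sup>2 * ln (real p) / (64 * (exp 1)\<^sup>2))))"
proof -
  define r where "r = Min (\<rho> ` {..<p})"
  define L where "L = ln (real p)"
  define u where "u = sqrt (L / (r ^ 3 * real n))"
  have r: "0 < r" and L: "0 < L" and n: "0 < real n"
    using Min_rho(1) p_ge2 n_pos by (simp_all add: r_def L_def)
  have u: "0 < u" "u\<^sup>2 = L / (r ^ 3 * real n)"
    using L r n by (simp_all add: u_def)
  have "(C * u * r)\<^sup>2 = C\<^sup>2 * (L / (r ^ 3 * real n)) * r\<^sup>2"
    by (simp only: power_mult_distrib u(2))
  also have "\<dots> = C\<^sup>2 * (L / (r * real n))"
    using r n by (simp add: power2_eq_square power3_eq_cube field_simps)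
  also have "\<dots> \<le> (8 * exp 1)\<^sup>2"
    using rate by (simp add: L_def r_def power_mult_distrib)
  finally have "C * u * r \<le> 8 * exp 1"
    by (rule power2_le_imp_le) simp
  then have wr: "C * (\<sigma>\<^sup>2 * u) * r \<le> 8 * exp 1 * \<sigma>\<^sup>2"
    using mult_left_mono[of "C * u * r" "8 * exp 1" "\<sigma>\<^sup>2"] by (simp add: mult_ac)
  have "real n * (C * (\<sigma>\<^sup>2 * u))\<^sup>2 * r ^ 3 / (16 * (2 * exp 1 * \<sigma>\<^sup>2)\<^sup>2)
      = real n * (C\<^sup>2 * ((\<sigma>\<^sup>2)\<^sup>2 * (L / (r ^ 3 * real n)))) * r ^ 3 / (16 * (2 * exp 1 * \<sigma>\<^sup>2)\<^sup>2)"
    by (simp only: power_mult_distrib u(2))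
  also have "\<dots> = C\<^sup>2 * L / (64 * (exp 1)\<^sup>2)"
    using \<sigma> r n by (simp add: power2_eq_square power3_eq_cube field_simps)
  finally have exponent: "real n * (C * (\<sigma>\<^sup>2 * u))\<^sup>2 * r ^ 3 / (16 * (2 * exp 1 * \<sigma>\<^sup>2)\<^sup>2)
      = C\<^sup>2 * L / (64 * (exp 1)\<^sup>2)" .
  have tail: "prob {\<omega> \<in> space M. C * (\<sigma>\<^sup>2 * u) < deviation j \<omega>} \<le> 2 * exp (- (C\<^sup>2 * L / (64 * (exp 1)\<^sup>2)))"
    if "j < p" for j
    using prob_column_deviation_tail[OF that \<sigma> _ wr[unfolded r_def]] exponent \<sigma> C u(1)
    by (simp add: r_def)
  have "prob {\<omega> \<in> space M. C * (\<sigma>\<^sup>2 * u) < \<bar>Max ((\<lambda>j. deviation j \<omega>) ` {..<p})\<bar>}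
      \<le> (\<Sum>j<p. prob {\<omega> \<in> space M. C * (\<sigma>\<^sup>2 * u) < deviation j \<omega>})"
    using p_ge2 deviation_measurable
    by (intro prob_abs_Max_gt_le_sum) (auto simp: lessThan_empty_iff)
  also have "\<dots> \<le> real p * (2 * exp (- (C\<^sup>2 * L / (64 * (exp 1)\<^sup>2))))"
    using sum_mono[of "{..<p}", OF tail] by simp
  finally show ?thesis
    by (simp add: u_def r_def L_def)
qed

lemma AE_X_eq_0_if_degenerate:
  assumes \<sigma>: "\<sigma> = 0" and ij: "i < n" "j < p"
  shows "AE \<omega> in M. X \<omega> i j = 0"
proof -
  have "(\<integral>\<omega>. (X \<omega> i j)\<^sup>2 \<partial>M) \<le> 0 + \<epsilon>" if "0 < \<epsilon>" for \<epsilon>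
  proof -
    have "bernstein_moments M (\<lambda>\<omega>. (X \<omega> i j)\<^sup>2) 2 (2 * exp 1 * (\<epsilon> / (4 * exp 1)))"
      using ij \<sigma> that by (intro column_bernstein_moments) auto
    then have "(\<integral>\<omega>. ((X \<omega> i j)\<^sup>2) ^ 1 \<partial>M) \<le> 2 * fact 1 * (2 * exp 1 * (\<epsilon> / (4 * exp 1))) ^ 1"
      unfolding bernstein_moments_def by blast
    then show ?thesis
      by simp
  qed
  then have "(\<integral>\<omega>. (X \<omega> i j)\<^sup>2 \<partial>M) \<le> 0"
    by (rule field_le_epsilon)
  moreover have "0 \<le> (\<integral>\<omega>. (X \<omega> i j)\<^sup>2 \<partial>M)"
    by (rule integral_nonneg_AE) simp
  ultimately have "(\<integral>\<omega>. (X \<omega> i j)\<^sup>2 \<partial>M) = 0"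
    by (rule antisym)
  then show ?thesis
    using integral_nonneg_eq_0_iff_AE[OF column_second_moment(1)[OF ij]] by auto
qed

lemma prob_max_deviation_null:
  assumes \<sigma>: "\<sigma> = 0"
  shows "prob {\<omega> \<in> space M. 0 < \<bar>Max ((\<lambda>j. deviation j \<omega>) ` {..<p})\<bar>} = 0"
proof -
  have "prob {\<omega> \<in> space M. 0 < deviation j \<omega>} = 0" if j: "j < p" for j
  proof (rule prob_eq_0_AE)
    have "AE \<omega> in M. \<forall>i\<in>{..<n}. X \<omega> i j = 0"
      using AE_X_eq_0_if_degenerate[OF \<sigma> _ j] by (intro AE_finite_allI) auto
    moreover have "\<Sigma> j j = 0"
    proof -
      have "(\<integral>\<omega>. (X \<omega> 0 j)\<^sup>2 \<partial>M) = (\<integral>\<omega>. 0 \<partial>M)"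
        using AE_X_eq_0_if_degenerate[OF \<sigma> _ j] X_measurable[OF _ j] n_pos
        by (intro integral_cong_AE) auto
      then show ?thesis
        using column_second_moment(2)[OF _ j, of 0] n_pos by simp
    qed
    ultimately show "AE \<omega> in M. \<not> 0 < deviation j \<omega>"
      by auto
  qed
  moreover have "prob {\<omega> \<in> space M. 0 < \<bar>Max ((\<lambda>j. deviation j \<omega>) ` {..<p})\<bar>}
      \<le> (\<Sum>j<p. prob {\<omega> \<in> space M. 0 < deviation j \<omega>})"
    using p_ge2 deviation_measurable
    by (intro prob_abs_Max_gt_le_sum) (auto simp: lessThan_empty_iff)
  ultimately show ?thesis
    using measure_nonneg[of M] by (simp add: order_antisym)
qed

lemma prob_max_deviation_le:
  fixes m :: nat
  assumes m: "1 \<le> m" and rate: "ln (real p) / (Min (\<rho> ` {..<p}) * real n) \<le> 1 / (real m)\<^sup>2"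
  shows "prob {\<omega> \<in> space M. 8 * exp 1 * real m * (\<sigma>\<^sup>2 * sqrt (ln (real p) / (Min (\<rho> ` {..<p}) ^ 3 * real n)))
      < \<bar>Max ((\<lambda>j. deviation j \<omega>) ` {..<p})\<bar>} \<le> 4 / 2 ^ m"
proof (cases "\<sigma> = 0")
  case True
  then show ?thesis
    using prob_max_deviation_null by simp
next
  case False
  have "(8 * exp 1 * real m)\<^sup>2 * (ln (real p) / (Min (\<rho> ` {..<p}) * real n))
      \<le> (8 * exp 1 * real m)\<^sup>2 * (1 / (real m)\<^sup>2)"
    using rate by (intro mult_left_mono) auto
  also have "\<dots> = 64 * (exp 1)\<^sup>2"
    using m by (simp add: power_mult_distrib)
  finally have rate': "(8 * exp 1 * real m)\<^sup>2 * (ln (real p) / (Min (\<rho> ` {..<p}) * real n)) \<le> 64 * (exp 1)\<^sup>2" .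
  have "prob {\<omega> \<in> space M. 8 * exp 1 * real m * (\<sigma>\<^sup>2 * sqrt (ln (real p) / (Min (\<rho> ` {..<p}) ^ 3 * real n)))
      < \<bar>Max ((\<lambda>j. deviation j \<omega>) ` {..<p})\<bar>}
      \<le> real p * (2 * exp (- ((8 * exp 1 * real m)\<^sup>2 * ln (real p) / (64 * (exp 1)\<^sup>2))))"
    by (rule prob_max_deviation_tail[OF False _ rate']) (use m in simp)
  also have "(8 * exp 1 * real m)\<^sup>2 * ln (real p) / (64 * (exp 1)\<^sup>2) = real m ^ 2 * ln (real p)"
    by (simp add: power_mult_distrib)
  also have "real p * (2 * exp (- (real m ^ 2 * ln (real p)))) \<le> 4 / 2 ^ m"
    by (rule union_bound_decay[OF p_ge2 m])
  finally show ?thesis .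
qed

end

lemma bigO_P_geometric_tails:
  assumes tails: "\<And>m::nat. 1 \<le> m \<Longrightarrow> \<forall>\<^sub>F n in sequentially.
      measure (M n) {\<omega> \<in> space (M n). \<bar>Y n \<omega>\<bar> > K * real m * a n} \<le> 4 / 2 ^ m"
  shows "bigO_P M Y a"
  unfolding bigO_P_def
proof (intro allI impI)
  fix \<epsilon> :: real
  assume \<epsilon>: "0 < \<epsilon>"
  obtain m :: nat where "4 / \<epsilon> < 2 ^ m"
    using real_arch_pow[of 2 "4 / \<epsilon>"] by auto
  then have "4 / 2 ^ Suc m \<le> \<epsilon>"
    using \<epsilon> by (simp add: field_simps)
  then show "\<exists>C. \<forall>\<^sub>F n in sequentially. measure (M n) {\<omega> \<in> space (M n). \<bar>Y n \<omega>\<bar> > C * a n} \<le> \<epsilon>"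
    using tails[of "Suc m"] by (intro exI[of _ "K * real (Suc m)"]) (auto elim!: eventually_mono)
qed

theorem lemma10:
  fixes M :: "nat \<Rightarrow> 'a measure"
    and p :: "nat \<Rightarrow> nat"
    and X R :: "nat \<Rightarrow> 'a \<Rightarrow> nat \<Rightarrow> nat \<Rightarrow> real"
    and \<Sigma>\<^sub>0 :: "nat \<Rightarrow> nat \<Rightarrow> nat \<Rightarrow> real"
    and \<sigma>\<^sub>x :: "nat \<Rightarrow> real"
    and \<rho> :: "nat \<Rightarrow> nat \<Rightarrow> real"
  assumes prob: "\<And>n. prob_space (M n)"
    and p_ge2: "\<And>n. p n \<ge> 2"
    \<comment> \<open>(A2): rows of X independent, identically distributed, zero-mean sub-Gaussian\<close>
    and rows_indep: "\<And>n. prob_space.indep_vars (M n) (\<lambda>_. PiM {..<p n} (\<lambda>_. borel))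
                 (\<lambda>i \<omega>. restrict (\<lambda>j. X n \<omega> i j) {..<p n}) {..<n}"
    and rows_ident: "\<And>n i. i < n \<Longrightarrow>
          distr (M n) (PiM {..<p n} (\<lambda>_. borel)) (\<lambda>\<omega>. restrict (\<lambda>j. X n \<omega> i j) {..<p n}) =
          distr (M n) (PiM {..<p n} (\<lambda>_. borel)) (\<lambda>\<omega>. restrict (\<lambda>j. X n \<omega> 0 j) {..<p n})"
    and rows_cov: "\<And>n i. i < n \<Longrightarrow> mean_zero_cov (M n) (p n) (\<lambda>\<omega> j. X n \<omega> i j) (\<Sigma>\<^sub>0 n)"
    and rows_subg: "\<And>n i. i < n \<Longrightarrow> subgaussian_vec (M n) (p n) (\<lambda>\<omega> j. X n \<omega> i j) (\<sigma>\<^sub>x n)"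
    \<comment> \<open>(A3): R_ij ~ Bernoulli(rho_j), mutually independent, independent of X\<close>
    and rho_pos: "\<And>n j. j < p n \<Longrightarrow> 0 < \<rho> n j \<and> \<rho> n j \<le> 1"
    and R_indep: "\<And>n. prob_space.indep_vars (M n) (\<lambda>_. borel)
                 (\<lambda>(i, j) \<omega>. R n \<omega> i j) ({..<n} \<times> {..<p n})"
    and R_01: "\<And>n i j \<omega>. i < n \<Longrightarrow> j < p n \<Longrightarrow> \<omega> \<in> space (M n) \<Longrightarrow> R n \<omega> i j \<in> {0, 1}"
    and R_bern: "\<And>n i j. i < n \<Longrightarrow> j < p n \<Longrightarrow>
          measure (M n) {\<omega> \<in> space (M n). R n \<omega> i j = 1} = \<rho> n j"
    and XR_indep: "\<And>n. prob_space.indep_var (M n)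
          (PiM ({..<n} \<times> {..<p n}) (\<lambda>_. borel)) (\<lambda>\<omega>. restrict (\<lambda>(i, j). X n \<omega> i j) ({..<n} \<times> {..<p n}))
          (PiM ({..<n} \<times> {..<p n}) (\<lambda>_. borel)) (\<lambda>\<omega>. restrict (\<lambda>(i, j). R n \<omega> i j) ({..<n} \<times> {..<p n}))"
    and rate: "(\<lambda>n. ln (real (p n)) / (Min (\<rho> n ` {..<p n}) * real n)) \<longlonglongrightarrow> 0"
  shows "bigO_P M
     (\<lambda>n \<omega>. Max ((\<lambda>j. \<bar>(1 - \<rho> n j) * ((1 / real n) *
                 (\<Sum>i<n. (R n \<omega> i j * X n \<omega> i j / \<rho> n j)\<^sup>2))
               - (1 / \<rho> n j - 1) * \<Sigma>\<^sub>0 n j j\<bar>) ` {..<p n}))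
     (\<lambda>n. (\<sigma>\<^sub>x n)\<^sup>2 * sqrt (ln (real (p n)) / ((Min (\<rho> n ` {..<p n})) ^ 3 * real n)))"
proof (rule bigO_P_geometric_tails[where K = "8 * exp 1"], goal_cases)
  case (1 m)
  have design: "masked_design (M n) (p n) n (X n) (R n) (\<Sigma>\<^sub>0 n) (\<sigma>\<^sub>x n) (\<rho> n)" if "1 \<le> n" for n
    using prob p_ge2 rows_indep rows_cov rows_subg rho_pos R_indep R_01 R_bern XR_indep that
    by (intro masked_design.intro masked_design_axioms.intro) auto
  have "0 < 1 / (real m)\<^sup>2"
    using 1 by simp
  from eventually_conj[OF eventually_ge_at_top[of 1] order_tendstoD(2)[OF rate this]]
  have "\<forall>\<^sub>F n in sequentially. 1 \<le> n \<and> ln (real (p n)) / (Min (\<rho> n ` {..<p n}) * real n) \<le> 1 / (real m)\<^sup>2"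
    by (rule eventually_mono) simp
  then show ?case
    by (rule eventually_mono)
      (use masked_design.prob_max_deviation_le[OF design 1] in blast)
qed

end
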